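(* Let $W_1$ and $W_2$ be wedges in the hyperbolic plane sharing a common boundary geodesic $g_2$, with their vertices at the two opposite ideal endpoints of $g_2$; let $g_1$ and $g_3$ be the other boundary geodesics of $W_1$ and $W_2$ respectively. Orient $g_2$ so that $g_1$ lies on its left, and let $s(g_2)$ be the shear along $g_2$ of the ideal quadrilateral whose vertices are the endpoints of $g_1$ and $g_3$. Let $h_1$ be a horocyclic arc in $W_1$ orthogonal to and connecting its two boundary sides, and let $h_2$ be the horocyclic arc in $W_2$ orthogonal to its boundary sides that continues $h_1$ (starting at the endpoint of $h_1$ on $g_2$). If $(W_1,W_2)$ is left-open then $\ell(h_2)=\dfrac{e^{s(g_2)}}{\ell(h_1)}$; if $(W_1,W_2)$ is left-closed then $\ell(h_2)=\dfrac{e^{-s(g_2)}}{\ell(h_1)}$.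
   Context: A wedge is the region between two geodesics sharing one ideal endpoint (its vertex); horocyclic arcs in a wedge lie on horocycles centered at its vertex. With $g_2$ oriented so that $g_1$ is on its left, the pair $(W_1,W_2)$ is left-open if $g_2$ shares its initial point with $g_1$ (and its terminal point with $g_3$), and left-closed if $g_2$ shares its initial point with $g_3$ (and its terminal point with $g_1$). Shear: for two ideal triangles $\Delta_1,\Delta_2$ sharing a side $g$, orient $g$ with $\Delta_1$ on its left; $s(g)$ is the signed distance along $g$ from the foot of the perpendicular from the third vertex of $\Delta_1$ to the foot of the perpendicular from the third vertex of $\Delta_2$. $\ell(\cdot)$ denotes hyperbolic length. *)

theory Defs
  imports "HOL-Analysis.Analysis"
begin

text \<open>Poincare disk model of the hyperbolic plane: points are complex numbers z with
  cmod z < 1; ideal points are complex numbers of modulus 1.\<close>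

definition hdist :: "complex \<Rightarrow> complex \<Rightarrow> real" where
  "hdist z w = arcosh (1 + 2 * (cmod (z - w))\<^sup>2 / ((1 - (cmod z)\<^sup>2) * (1 - (cmod w)\<^sup>2)))"

definition hyp_geodesic :: "complex \<Rightarrow> complex \<Rightarrow> (real \<Rightarrow> complex) \<Rightarrow> bool" where
  "hyp_geodesic p q c \<longleftrightarrow> cmod p = 1 \<and> cmod q = 1 \<and> (\<forall>t. cmod (c t) < 1) \<and>
     (\<forall>s t. hdist (c s) (c t) = \<bar>s - t\<bar>) \<and> (c \<longlongrightarrow> q) at_top \<and> (c \<longlongrightarrow> p) at_bot"

definition geod :: "complex \<Rightarrow> complex \<Rightarrow> complex set" where
  "geod p q = {z. \<exists>c t. hyp_geodesic p q c \<and> z = c t}"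

text \<open>Horocycle centred at the ideal point p: a Euclidean circle of radius r in the disk
  internally tangent to the unit circle at p (with p itself removed).\<close>
definition horocycle :: "complex \<Rightarrow> real \<Rightarrow> complex set" where
  "horocycle p r = {z. cmod z < 1 \<and> cmod (z - complex_of_real (1 - r) * p) = r}"

definition hyp_length :: "(real \<Rightarrow> complex) \<Rightarrow> real" where
  "hyp_length \<gamma> = integral {0..1}
     (\<lambda>t. 2 * norm (vector_derivative \<gamma> (at t)) / (1 - (cmod (\<gamma> t))\<^sup>2))"

text \<open>u, v, w (distinct points of the unit circle) are in counterclockwise cyclic order.\<close>
definition ccw :: "complex \<Rightarrow> complex \<Rightarrow> complex \<Rightarrow> bool" where
  "ccw u v w \<longleftrightarrow> Im (cnj (v - u) * (w - u)) > 0"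

text \<open>The ideal point a lies on the left of the geodesic oriented from p to q
  (standard orientation of the plane).\<close>
definition ideal_left :: "complex \<Rightarrow> complex \<Rightarrow> complex \<Rightarrow> bool" where
  "ideal_left p q a \<longleftrightarrow> ccw q a p"

text \<open>c t is the foot of the perpendicular dropped from the ideal point a to the
  geodesic line c: some geodesic line emanating from a passes through c t
  orthogonally to c (the disk model is conformal).\<close>
definition perp_foot :: "complex \<Rightarrow> (real \<Rightarrow> complex) \<Rightarrow> real \<Rightarrow> bool" where
  "perp_foot a c t \<longleftrightarrow> (\<exists>e c' u v. hyp_geodesic a e c' \<and> c' 0 = c t \<and>
      (c has_vector_derivative u) (at t) \<and> (c' has_vector_derivative v) (at 0) \<and>
      u \<noteq> 0 \<and> v \<noteq> 0 \<and> Re (cnj u * v) = 0)"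

definition signed_foot_dist :: "complex \<Rightarrow> complex \<Rightarrow> complex \<Rightarrow> complex \<Rightarrow> real" where
  "signed_foot_dist p q a b = (THE s. \<exists>c t1 t2. hyp_geodesic p q c \<and>
      perp_foot a c t1 \<and> perp_foot b c t2 \<and> s = t2 - t1)"

text \<open>Shear along the geodesic g with endpoints x, y of the ideal triangles
  Delta1 = (x, y, a) and Delta2 = (x, y, b): g is oriented with Delta1 on its left.\<close>
definition shear :: "complex \<Rightarrow> complex \<Rightarrow> complex \<Rightarrow> complex \<Rightarrow> real" where
  "shear x y a b = (if ideal_left x y a then signed_foot_dist x y a b
                    else signed_foot_dist y x a b)"

end

theory Submission
  imports Defs
begin

text \<open>
  The Moebius map cayley p q z = k (z - p) / (q - z), with k = i (1 - q cnj p) / 2, is an isometry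
  from the Poincare disk onto the upper half-plane taking the ideal points p and q to 0 and
  infinity. In this picture the geodesic from p to q is the positive imaginary axis, the geodesics
  ending at q are vertical lines, the horocycles centred at q are horizontal lines, and the
  perpendicular from a point A of the real axis to the imaginary axis is the semicircle |w| = |A|,
  with foot i |A|. Hence a horocyclic arc at height Y between the vertical lines over A and B has
  length |B - A| / Y, and the signed distance between the feet of the perpendiculars from the
  ideal points with images A and B is ln |B / A|.

  Measure h1 in the picture sending v1 to infinity and h2 in the picture sending v2 to infinity.
  The two pictures differ by the inversion w \<mapsto> -|v1 - v2|^2 / (4 w), so both the heights of
  the two arcs and the two images of a have product |v1 - v2|^2 / 4. This turns l(h1) l(h2) into
  the ratio |B' / A'| of the images of b and a in the second picture, which is exp (s(g2)) if
  (W1, W2) is left-open and exp (- s(g2)) if it is left-closed.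
\<close>

section \<open>A Moebius chart of the disk on the upper half-plane\<close>

definition cayley_coeff :: "complex \<Rightarrow> complex \<Rightarrow> complex" where
  "cayley_coeff p q = \<i> * (1 - q * cnj p) / 2"

definition cayley :: "complex \<Rightarrow> complex \<Rightarrow> complex \<Rightarrow> complex" where
  "cayley p q z = cayley_coeff p q * (z - p) / (q - z)"

definition cayley_inv :: "complex \<Rightarrow> complex \<Rightarrow> complex \<Rightarrow> complex" where
  "cayley_inv p q w = (q * w + p * cayley_coeff p q) / (w + cayley_coeff p q)"

lemma unit_iff_Re_Im: "cmod p = 1 \<longleftrightarrow> (Re p)\<^sup>2 + (Im p)\<^sup>2 = 1"
  by (simp add: cmod_def)

lemma unit_mult_cnj: "cmod p = 1 \<Longrightarrow> p * cnj p = 1"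
  by (metis complex_norm_square of_real_1 power_one)

lemma cayley_coeff_unit: "cmod p = 1 \<Longrightarrow> cayley_coeff p q = \<i> * cnj p * (p - q) / 2"
  unfolding cayley_coeff_def using unit_mult_cnj[of p] by (simp add: algebra_simps)

lemma norm_cayley_coeff: "cmod p = 1 \<Longrightarrow> cmod (cayley_coeff p q) = cmod (q - p) / 2"
  by (simp add: cayley_coeff_unit norm_mult norm_divide norm_minus_commute)

lemma Im_cayley_coeff:
  assumes "cmod p = 1" "cmod q = 1"
  shows "Im (cayley_coeff p q) = (cmod (q - p))\<^sup>2 / 4"
  using assms unfolding unit_iff_Re_Im cmod_power2
  by (simp add: cayley_coeff_def power2_eq_square field_simps)

lemma cayley_coeff_nonzero: "cmod p = 1 \<Longrightarrow> p \<noteq> q \<Longrightarrow> cayley_coeff p q \<noteq> 0"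
  using norm_cayley_coeff[of p q] by auto

lemma add_cayley_coeff_nonzero:
  assumes "cmod p = 1" "cmod q = 1" "p \<noteq> q" "Im w \<ge> 0"
  shows "w + cayley_coeff p q \<noteq> 0"
proof -
  have "(cmod (q - p))\<^sup>2 > 0" using assms(3) by simp
  moreover have "Im (w + cayley_coeff p q) = Im w + (cmod (q - p))\<^sup>2 / 4"
    using Im_cayley_coeff[OF assms(1,2)] by simp
  ultimately have "Im (w + cayley_coeff p q) > 0"
    using assms(4) by linarith
  then show ?thesis
    by (auto simp: complex_eq_iff)
qed

lemma Im_cayley:
  assumes "cmod p = 1" "cmod q = 1" "z \<noteq> q"
  shows "Im (cayley p q z) = (cmod (q - p))\<^sup>2 * (1 - (cmod z)\<^sup>2) / (4 * (cmod (q - z))\<^sup>2)"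
proof -
  have numerator:
    "Im (cayley_coeff p q * (z - p) * cnj (q - z)) = (cmod (q - p))\<^sup>2 * (1 - (cmod z)\<^sup>2) / 4"
    using assms(1,2) unfolding unit_iff_Re_Im cmod_power2
    by (simp add: cayley_coeff_def power2_eq_square algebra_simps) algebra
  have "cayley p q z = cayley_coeff p q * (z - p) * cnj (q - z) / ((q - z) * cnj (q - z))"
    using assms(3) by (simp add: cayley_def)
  also have "(q - z) * cnj (q - z) = of_real ((cmod (q - z))\<^sup>2)"
    by (simp only: complex_mult_cnj cmod_power2)
  finally show ?thesis
    by (simp only: Im_divide_of_real numerator)
qed

lemma Im_cayley_pos:
  assumes "cmod p = 1" "cmod q = 1" "p \<noteq> q" "cmod z < 1"
  shows "Im (cayley p q z) > 0"
proof -
  have "z \<noteq> q"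
    using assms(2,4) by auto
  moreover have "(cmod (q - p))\<^sup>2 > 0" "(cmod (q - z))\<^sup>2 > 0" "1 - (cmod z)\<^sup>2 > 0"
    using assms \<open>z \<noteq> q\<close> by (auto simp: abs_square_less_1)
  ultimately show ?thesis
    by (simp add: Im_cayley[OF assms(1,2)])
qed

lemma cayley_unit_of_real:
  assumes "cmod p = 1" "cmod q = 1" "cmod a = 1" "a \<noteq> q"
  shows "cayley p q a = of_real (Re (cayley p q a))"
  using Im_cayley[OF assms(1,2,4)] assms(3) by (simp add: complex_eq_iff)

lemma cayley_self [simp]: "cayley p q p = 0"
  by (simp add: cayley_def)

lemma Re_cayley_unit_nonzero:
  assumes "cmod p = 1" "cmod q = 1" "cmod a = 1" "p \<noteq> q" "a \<noteq> p" "a \<noteq> q"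
  shows "Re (cayley p q a) \<noteq> 0"
proof
  assume "Re (cayley p q a) = 0"
  then have "cayley p q a = 0"
    using cayley_unit_of_real[OF assms(1-3,6)] by simp
  then show False
    using assms(5,6) cayley_coeff_nonzero[OF assms(1,4)] by (simp add: cayley_def)
qed

lemma cayley_diff:
  assumes "z1 \<noteq> q" "z2 \<noteq> q"
  shows "cayley p q z1 - cayley p q z2 = cayley_coeff p q * (q - p) * (z1 - z2) / ((q - z1) * (q - z2))"
  using assms by (simp add: cayley_def field_simps)

lemma cayley_inv_cayley:
  assumes "cmod p = 1" "p \<noteq> q" "z \<noteq> q"
  shows "cayley_inv p q (cayley p q z) = z"
proof -
  have "q - z \<noteq> 0" "q - p \<noteq> 0" "cayley_coeff p q \<noteq> 0"
    using assms cayley_coeff_nonzero[OF assms(1,2)] by auto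
  moreover have "cayley p q z + cayley_coeff p q = cayley_coeff p q * (q - p) / (q - z)"
    "q * cayley p q z + p * cayley_coeff p q = cayley_coeff p q * (q - p) / (q - z) * z"
    using \<open>q - z \<noteq> 0\<close> by (simp_all add: cayley_def field_simps)
  ultimately show ?thesis
    by (simp add: cayley_inv_def)
qed

lemma q_minus_cayley_inv:
  "w + cayley_coeff p q \<noteq> 0 \<Longrightarrow> q - cayley_inv p q w = cayley_coeff p q * (q - p) / (w + cayley_coeff p q)"
  by (simp add: cayley_inv_def field_simps)

lemma cayley_cayley_inv:
  assumes "cmod p = 1" "p \<noteq> q" "w + cayley_coeff p q \<noteq> 0"
  shows "cayley p q (cayley_inv p q w) = w"
proof -
  have "cayley_inv p q w - p = w * (q - p) / (w + cayley_coeff p q)"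
    using assms(3) by (simp add: cayley_inv_def field_simps)
  moreover have "cayley_coeff p q \<noteq> 0" "q - p \<noteq> 0"
    using cayley_coeff_nonzero[OF assms(1,2)] assms(2) by auto
  ultimately show ?thesis
    using assms(3) by (simp add: cayley_def q_minus_cayley_inv)
qed

lemma cayley_inv_ne:
  assumes "cmod p = 1" "p \<noteq> q" "w + cayley_coeff p q \<noteq> 0"
  shows "cayley_inv p q w \<noteq> q"
  using q_minus_cayley_inv[OF assms(3)] cayley_coeff_nonzero[OF assms(1,2)] assms(2,3) by auto

lemma norm_cayley_inv:
  assumes "cmod p = 1" "cmod q = 1" "p \<noteq> q" "Im w \<ge> 0"
  shows "(cmod (cayley_inv p q w))\<^sup>2 = 1 - 4 * Im w * (cmod (q - cayley_inv p q w))\<^sup>2 / (cmod (q - p))\<^sup>2"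
proof -
  have wk: "w + cayley_coeff p q \<noteq> 0" by (rule add_cayley_coeff_nonzero[OF assms])
  let ?z = "cayley_inv p q w"
  have "Im w = (cmod (q - p))\<^sup>2 * (1 - (cmod ?z)\<^sup>2) / (4 * (cmod (q - ?z))\<^sup>2)"
    using Im_cayley[OF assms(1,2) cayley_inv_ne[OF assms(1,3) wk]] cayley_cayley_inv[OF assms(1,3) wk]
    by simp
  then show ?thesis
    using assms(3) cayley_inv_ne[OF assms(1,3) wk] by (simp add: field_simps)
qed

lemma norm_cayley_inv_less_1:
  assumes "cmod p = 1" "cmod q = 1" "p \<noteq> q" "Im w > 0"
  shows "cmod (cayley_inv p q w) < 1"
proof -
  have "cayley_inv p q w \<noteq> q"
    using cayley_inv_ne add_cayley_coeff_nonzero assms by (simp add: less_imp_le)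
  then have "(cmod (cayley_inv p q w))\<^sup>2 < 1"
    using norm_cayley_inv[OF assms(1-3)] assms(3,4) by simp
  then show ?thesis by (simp add: abs_square_less_1)
qed

lemma norm_cayley_inv_of_real:
  assumes "cmod p = 1" "cmod q = 1" "p \<noteq> q"
  shows "cmod (cayley_inv p q (of_real x)) = 1"
  using norm_cayley_inv[OF assms, of "of_real x"] by (simp add: abs_square_eq_1)

lemma cayley_swap:
  assumes "cmod p = 1" "cmod q = 1" "z \<noteq> p" "z \<noteq> q"
  shows "cayley q p z * cayley p q z = - of_real ((cmod (q - p))\<^sup>2) / 4"
proof -
  have "p - z \<noteq> 0" "q - z \<noteq> 0" using assms(3,4) by auto
  then have "(z - q) / (p - z) * ((z - p) / (q - z)) = 1"
    by (simp add: divide_simps) (simp add: algebra_simps)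
  moreover have "cayley q p z * cayley p q z =
      cayley_coeff q p * cayley_coeff p q * ((z - q) / (p - z) * ((z - p) / (q - z)))"
    by (simp add: cayley_def)
  ultimately have "cayley q p z * cayley p q z = cayley_coeff q p * cayley_coeff p q"
    by simp
  also have "\<dots> = - of_real ((cmod (q - p))\<^sup>2) / 4"
    using assms(1,2) unfolding cayley_coeff_def unit_iff_Re_Im cmod_power2
    by (simp add: complex_eq_iff power2_eq_square algebra_simps) algebra
  finally show ?thesis .
qed

section \<open>Geodesics of the upper half-plane\<close>

definition uhp_dist :: "complex \<Rightarrow> complex \<Rightarrow> real" where
  "uhp_dist w1 w2 = arcosh (1 + (cmod (w1 - w2))\<^sup>2 / (2 * Im w1 * Im w2))"

definition uhp_geodesic :: "(real \<Rightarrow> complex) \<Rightarrow> bool" where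
  "uhp_geodesic g \<longleftrightarrow> (\<forall>t. Im (g t) > 0) \<and> (\<forall>s t. uhp_dist (g s) (g t) = \<bar>s - t\<bar>)"

lemma uhp_dist_eq_iff:
  assumes "Im w1 > 0" "Im w2 > 0" "d \<ge> 0"
  shows "uhp_dist w1 w2 = d \<longleftrightarrow> (cmod (w1 - w2))\<^sup>2 = 2 * Im w1 * Im w2 * (cosh d - 1)"
proof -
  let ?x = "1 + (cmod (w1 - w2))\<^sup>2 / (2 * Im w1 * Im w2)"
  have "?x \<ge> 1" using assms(1,2) by simp
  then have "arcosh ?x = d \<longleftrightarrow> ?x = cosh d"
    using assms(3) by (metis arcosh_cosh_real cosh_arcosh_real)
  then show ?thesis
    using assms(1,2) by (auto simp: uhp_dist_def field_simps)
qed

lemma uhp_geodesic_dist_sq: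
  assumes "uhp_geodesic g"
  shows "(cmod (g s - g t))\<^sup>2 = 2 * Im (g s) * Im (g t) * (cosh (s - t) - 1)"
  using assms uhp_dist_eq_iff[of "g s" "g t" "\<bar>s - t\<bar>"] by (simp add: uhp_geodesic_def)

lemma uhp_geodesic_inj:
  assumes "uhp_geodesic g" "g s = g t"
  shows "s = t"
proof (rule ccontr)
  assume "s \<noteq> t"
  then have "cosh (s - t) > 1"
    using cosh_real_ge_1[of "s - t"] cosh_real_one_iff[of "s - t"] by linarith
  moreover have "Im (g s) > 0" "Im (g t) > 0"
    using assms(1) by (auto simp: uhp_geodesic_def)
  ultimately show False
    using uhp_geodesic_dist_sq[OF assms(1), of s t] assms(2) by simp
qed

text \<open>The limit does not depend on the choice of t, which forces Im (g t) * exp (- t) to be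
  constant.\<close>
lemma uhp_geodesic_ratio_tendsto:
  assumes "uhp_geodesic g" "filterlim g at_infinity at_top"
  shows "((\<lambda>u. (cmod (g u))\<^sup>2 / (exp u * Im (g u))) \<longlongrightarrow> Im (g t) * exp (- t)) at_top"
proof -
  have Im_pos: "Im (g u) > 0" for u
    using assms(1) by (simp add: uhp_geodesic_def)
  define G where "G u = Im (g t) * (exp (- t) + exp t * (exp (- u))\<^sup>2 - 2 * exp (- u))" for u
  define H where "H u = 1 / (cmod (g t / g u - 1))\<^sup>2" for u
  have "((\<lambda>u::real. exp (- u)) \<longlongrightarrow> 0) at_top"
    by (simp add: exp_minus) (intro tendsto_inverse_0_at_top exp_at_top)
  then have "(G \<longlongrightarrow> Im (g t) * (exp (- t) + exp t * 0\<^sup>2 - 2 * 0)) at_top"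
    unfolding G_def by (intro tendsto_intros)
  moreover have "(H \<longlongrightarrow> 1 / (cmod (0 - 1))\<^sup>2) at_top"
    unfolding H_def by (intro tendsto_intros tendsto_divide_0[OF tendsto_const assms(2)]) simp
  ultimately have "((\<lambda>u. G u * H u) \<longlongrightarrow> Im (g t) * exp (- t)) at_top"
    using tendsto_mult by force
  moreover have "eventually (\<lambda>u. G u * H u = (cmod (g u))\<^sup>2 / (exp u * Im (g u))) at_top"
    using eventually_gt_at_top[of t]
  proof eventually_elim
    case (elim u)
    have "g t \<noteq> g u" "g u \<noteq> 0"
      using uhp_geodesic_inj[OF assms(1), of t u] elim Im_pos[of u] by auto
    have "G u * exp u * Im (g u) = (cmod (g t - g u))\<^sup>2"
      unfolding uhp_geodesic_dist_sq[OF assms(1)] G_def cosh_def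
      by (simp add: field_simps power2_eq_square exp_diff exp_minus)
    then have G_eq: "G u = (cmod (g t - g u))\<^sup>2 / (exp u * Im (g u))"
      using Im_pos[of u] by (simp add: field_simps)
    have "g t / g u - 1 = (g t - g u) / g u"
      using \<open>g u \<noteq> 0\<close> by (simp add: field_simps)
    then have H_eq: "H u = (cmod (g u))\<^sup>2 / (cmod (g t - g u))\<^sup>2"
      by (simp add: H_def norm_divide power_divide)
    show ?case
      using \<open>g t \<noteq> g u\<close> by (simp add: G_eq H_eq)
  qed
  ultimately show ?thesis
    by (rule Lim_transform_eventually)
qed

lemma uhp_geodesic_Im_exp:
  assumes "uhp_geodesic g" "filterlim g at_infinity at_top"
  shows "Im (g t) = Im (g 0) * exp t"
proof -
  have "Im (g t) * exp (- t) = Im (g 0) * exp (- 0)"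
    using uhp_geodesic_ratio_tendsto[OF assms, of t] uhp_geodesic_ratio_tendsto[OF assms, of 0]
    by (rule tendsto_unique[rotated]) simp
  then have "Im (g t) * exp (- t) * exp t = Im (g 0) * exp t"
    by simp
  then show ?thesis
    by (simp add: mult.assoc flip: exp_add)
qed

lemma uhp_geodesic_vertical:
  assumes "uhp_geodesic g" "filterlim g at_infinity at_top"
  shows "g t = Complex (Re (g 0)) (Im (g 0) * exp t)"
proof -
  have "(Re (g t) - Re (g 0))\<^sup>2 + (Im (g t) - Im (g 0))\<^sup>2 = 2 * Im (g t) * Im (g 0) * (cosh (t - 0) - 1)"
    using uhp_geodesic_dist_sq[OF assms(1), of t 0] by (simp add: cmod_power2)
  also have "\<dots> = (Im (g t) - Im (g 0))\<^sup>2"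
    unfolding uhp_geodesic_Im_exp[OF assms, of t] cosh_def
    by (simp add: power2_eq_square field_simps exp_minus)
  finally have "Re (g t) = Re (g 0)" by simp
  then show ?thesis
    using uhp_geodesic_Im_exp[OF assms, of t] by (simp add: complex_eq_iff)
qed

lemma uhp_geodesic_tendsto_at_bot:
  assumes "uhp_geodesic g" "filterlim g at_infinity at_top"
  shows "(g \<longlongrightarrow> of_real (Re (g 0))) at_bot"
proof -
  define x y where "x = Re (g 0)" and "y = Im (g 0)"
  have "g t = of_real x + \<i> * of_real (y * exp t)" for t
    using uhp_geodesic_vertical[OF assms, of t] by (simp add: x_def y_def complex_eq_iff)
  then have "g = (\<lambda>t. of_real x + \<i> * of_real (y * exp t))"
    by blast
  moreover have "((\<lambda>t. of_real x + \<i> * of_real (y * exp t)) \<longlongrightarrow> of_real x + \<i> * of_real (y * 0)) at_bot"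
    by (intro tendsto_intros exp_at_bot)
  ultimately show ?thesis
    by (simp add: x_def)
qed

lemma uhp_geodesic_imag_axis: "uhp_geodesic (\<lambda>t. \<i> * of_real (exp t))"
proof -
  have "(cmod (\<i> * of_real (exp s) - \<i> * of_real (exp t)))\<^sup>2 = 2 * exp s * exp t * (cosh \<bar>s - t\<bar> - 1)"
    for s t :: real
  proof -
    have "(cmod (\<i> * of_real (exp s) - \<i> * of_real (exp t)))\<^sup>2 = (exp s - exp t)\<^sup>2"
      by (simp add: norm_mult flip: right_diff_distrib of_real_diff)
    also have "\<dots> = 2 * exp s * exp t * (cosh (s - t) - 1)"
      by (simp add: cosh_def exp_diff exp_minus power2_eq_square field_simps)
    finally show ?thesis
      by simp
  qed
  then show ?thesis
    by (simp add: uhp_geodesic_def uhp_dist_eq_iff)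
qed

text \<open>Unit-speed parametrisation of the semicircle |w| = |A| from A to -A, with apex at s = 0.\<close>
definition uhp_semicircle :: "real \<Rightarrow> real \<Rightarrow> complex" where
  "uhp_semicircle A s = of_real (- A * tanh s) + \<i> * of_real (\<bar>A\<bar> / cosh s)"

lemma uhp_geodesic_semicircle:
  assumes "A \<noteq> 0"
  shows "uhp_geodesic (uhp_semicircle A)"
proof -
  have cosh_pos: "cosh x > 0" for x :: real
    by (rule cosh_real_pos)
  have "(cmod (uhp_semicircle A s - uhp_semicircle A t))\<^sup>2 =
      2 * Im (uhp_semicircle A s) * Im (uhp_semicircle A t) * (cosh \<bar>s - t\<bar> - 1)" for s t
  proof -
    have "\<bar>A\<bar>\<^sup>2 = A\<^sup>2" by simp
    then have "(cmod (uhp_semicircle A s - uhp_semicircle A t))\<^sup>2 =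
        A\<^sup>2 * ((sinh s / cosh s - sinh t / cosh t)\<^sup>2 + (1 / cosh s - 1 / cosh t)\<^sup>2)"
      unfolding cmod_power2
      by (simp add: uhp_semicircle_def tanh_def power2_eq_square algebra_simps)
    also have "(sinh s / cosh s - sinh t / cosh t)\<^sup>2 + (1 / cosh s - 1 / cosh t)\<^sup>2 =
        ((sinh s * cosh t - sinh t * cosh s)\<^sup>2 + (cosh t - cosh s)\<^sup>2) / (cosh s * cosh t)\<^sup>2"
      using cosh_pos[of s] cosh_pos[of t] by (simp add: field_simps power2_eq_square)
    also have "(sinh s * cosh t - sinh t * cosh s)\<^sup>2 + (cosh t - cosh s)\<^sup>2 =
        2 * cosh s * cosh t * (cosh s * cosh t - sinh s * sinh t - 1)"
      using sinh_square_eq[of s] sinh_square_eq[of t]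
      by (simp add: power2_eq_square algebra_simps) algebra
    finally have sq: "(cmod (uhp_semicircle A s - uhp_semicircle A t))\<^sup>2 =
        A\<^sup>2 * (2 * cosh s * cosh t * (cosh s * cosh t - sinh s * sinh t - 1) / (cosh s * cosh t)\<^sup>2)" .
    have "Im (uhp_semicircle A s) * Im (uhp_semicircle A t) = A\<^sup>2 / (cosh s * cosh t)"
      by (simp add: uhp_semicircle_def power2_eq_square)
    then have "2 * Im (uhp_semicircle A s) * Im (uhp_semicircle A t) * (cosh \<bar>s - t\<bar> - 1) =
        2 * (A\<^sup>2 / (cosh s * cosh t)) * (cosh s * cosh t - sinh s * sinh t - 1)"
      by (simp add: cosh_diff mult.assoc)
    also have "\<dots> = (cmod (uhp_semicircle A s - uhp_semicircle A t))\<^sup>2"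
      unfolding sq using cosh_pos[of s] cosh_pos[of t] by (simp add: field_simps power2_eq_square)
    finally show ?thesis ..
  qed
  then show ?thesis
    using assms cosh_pos by (simp add: uhp_geodesic_def uhp_dist_eq_iff uhp_semicircle_def)
qed

lemma uhp_semicircle_0: "uhp_semicircle A 0 = \<i> * of_real \<bar>A\<bar>"
  by (simp add: uhp_semicircle_def)

lemma uhp_semicircle_tendsto_at_top: "(uhp_semicircle A \<longlongrightarrow> of_real (- A)) at_top"
proof -
  have "((\<lambda>s. \<bar>A\<bar> / cosh s) \<longlongrightarrow> 0) at_top"
    by (intro tendsto_divide_0[OF tendsto_const] filterlim_at_top_imp_at_infinity cosh_real_at_top)
  then have "(uhp_semicircle A \<longlongrightarrow> of_real (- A * 1) + \<i> * of_real 0) at_top"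
    unfolding uhp_semicircle_def by (intro tendsto_intros tanh_real_at_top)
  then show ?thesis by simp
qed

lemma uhp_semicircle_tendsto_at_bot: "(uhp_semicircle A \<longlongrightarrow> of_real A) at_bot"
proof -
  have "((\<lambda>s. \<bar>A\<bar> / cosh s) \<longlongrightarrow> 0) at_bot"
    by (intro tendsto_divide_0[OF tendsto_const] filterlim_at_top_imp_at_infinity cosh_real_at_bot)
  then have "(uhp_semicircle A \<longlongrightarrow> of_real (- A * - 1) + \<i> * of_real 0) at_bot"
    unfolding uhp_semicircle_def by (intro tendsto_intros tanh_real_at_bot)
  then show ?thesis by simp
qed

lemma uhp_semicircle_vector_derivative_0:
  "(uhp_semicircle A has_vector_derivative of_real (- A)) (at 0)"
proof -
  have "((\<lambda>s. - A * tanh s) has_real_derivative - A * (1 - tanh 0 ^ 2)) (at 0)"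
    by (auto intro!: derivative_eq_intros)
  moreover have "((\<lambda>s. \<bar>A\<bar> / cosh s) has_real_derivative - (\<bar>A\<bar> * sinh 0) / (cosh 0 * cosh 0)) (at 0)"
    by (auto intro!: derivative_eq_intros)
  ultimately have "(uhp_semicircle A has_vector_derivative
      of_real (- A * (1 - tanh 0 ^ 2)) + \<i> * of_real (- (\<bar>A\<bar> * sinh 0) / (cosh 0 * cosh 0))) (at 0)"
    unfolding uhp_semicircle_def
    by (intro has_vector_derivative_add has_vector_derivative_mult_right has_vector_derivative_of_real)
  then show ?thesis by simp
qed

section \<open>Geodesics of the disk\<close>

lemma hdist_cayley:
  assumes "cmod p = 1" "cmod q = 1" "p \<noteq> q" "cmod z1 < 1" "cmod z2 < 1"
  shows "hdist z1 z2 = uhp_dist (cayley p q z1) (cayley p q z2)"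
proof -
  have ne: "z1 \<noteq> q" "z2 \<noteq> q" using assms by auto
  have pos: "cmod (q - p) > 0" "cmod (q - z1) > 0" "cmod (q - z2) > 0"
    "1 - (cmod z1)\<^sup>2 > 0" "1 - (cmod z2)\<^sup>2 > 0"
    using assms ne by (auto simp: abs_square_less_1)
  have scale: "(A\<^sup>2 * D / (2 * B1 * B2))\<^sup>2 / (2 * (A\<^sup>2 * R1 / (4 * B1\<^sup>2)) * (A\<^sup>2 * R2 / (4 * B2\<^sup>2))) =
      2 * D\<^sup>2 / (R1 * R2)" if "A > 0" "B1 > 0" "B2 > 0" "R1 > 0" "R2 > 0" for A B1 B2 D R1 R2 :: real
    using that by (simp add: field_simps power2_eq_square)
  have "cmod (cayley p q z1 - cayley p q z2) =
      (cmod (q - p))\<^sup>2 * cmod (z1 - z2) / (2 * cmod (q - z1) * cmod (q - z2))"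
    by (simp add: cayley_diff[OF ne] norm_mult norm_divide norm_cayley_coeff[OF assms(1)]
        power2_eq_square)
  then have "(cmod (cayley p q z1 - cayley p q z2))\<^sup>2 / (2 * Im (cayley p q z1) * Im (cayley p q z2)) =
      2 * (cmod (z1 - z2))\<^sup>2 / ((1 - (cmod z1)\<^sup>2) * (1 - (cmod z2)\<^sup>2))"
    by (simp only: Im_cayley[OF assms(1,2) ne(1)] Im_cayley[OF assms(1,2) ne(2)] scale pos)
  then show ?thesis
    by (simp add: hdist_def uhp_dist_def)
qed

lemma hyp_geodesic_ne_ideal:
  assumes "hyp_geodesic x y c" "cmod q = 1"
  shows "c t \<noteq> q"
proof -
  have "cmod (c t) < 1"
    using assms(1) by (simp add: hyp_geodesic_def)
  then show ?thesis
    using assms(2) by auto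
qed

lemma hyp_geodesic_cayley:
  assumes "cmod p = 1" "cmod q = 1" "p \<noteq> q" "hyp_geodesic x y c"
  shows "uhp_geodesic (\<lambda>t. cayley p q (c t))"
  using assms Im_cayley_pos[OF assms(1-3)] hdist_cayley[OF assms(1-3)]
  unfolding hyp_geodesic_def uhp_geodesic_def by metis

lemma hyp_geodesic_cayley_inv:
  assumes "cmod p = 1" "cmod q = 1" "p \<noteq> q" "uhp_geodesic g" "cmod x = 1" "cmod y = 1"
    "((\<lambda>t. cayley_inv p q (g t)) \<longlongrightarrow> x) at_bot" "((\<lambda>t. cayley_inv p q (g t)) \<longlongrightarrow> y) at_top"
  shows "hyp_geodesic x y (\<lambda>t. cayley_inv p q (g t))"
proof -
  have Im_pos: "Im (g t) > 0" for t
    using assms(4) by (simp add: uhp_geodesic_def)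
  have disk: "cmod (cayley_inv p q (g t)) < 1" for t
    by (rule norm_cayley_inv_less_1[OF assms(1-3) Im_pos])
  have "cayley p q (cayley_inv p q (g t)) = g t" for t
    by (rule cayley_cayley_inv[OF assms(1,3) add_cayley_coeff_nonzero[OF assms(1-3)]])
      (use Im_pos[of t] in simp)
  then have "hdist (cayley_inv p q (g s)) (cayley_inv p q (g t)) = \<bar>s - t\<bar>" for s t
    using hdist_cayley[OF assms(1-3) disk disk, of s t] assms(4) by (simp add: uhp_geodesic_def)
  then show ?thesis
    using assms(5-8) disk by (simp add: hyp_geodesic_def)
qed

lemma tendsto_cayley:
  "(c \<longlongrightarrow> x) F \<Longrightarrow> x \<noteq> q \<Longrightarrow> ((\<lambda>t. cayley p q (c t)) \<longlongrightarrow> cayley p q x) F"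
  unfolding cayley_def by (intro tendsto_intros) auto

lemma filterlim_cayley_at_infinity:
  assumes "cmod p = 1" "p \<noteq> q" "(c \<longlongrightarrow> q) F" "eventually (\<lambda>t. c t \<noteq> q) F"
  shows "filterlim (\<lambda>t. cayley p q (c t)) at_infinity F"
proof -
  have "((\<lambda>t. q - c t) \<longlongrightarrow> 0) F"
    using tendsto_diff[OF tendsto_const[of q] assms(3)] by simp
  then have "filterlim (\<lambda>t. q - c t) (at 0) F"
    using assms(4) by (auto intro!: filterlim_atI elim: eventually_mono)
  then have "filterlim (\<lambda>t. inverse (q - c t)) at_infinity F"
    by (rule filterlim_compose[OF filterlim_inverse_at_infinity])
  moreover have "((\<lambda>t. cayley_coeff p q * (c t - p)) \<longlongrightarrow> cayley_coeff p q * (q - p)) F"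
    by (intro tendsto_intros assms(3))
  moreover have "cayley_coeff p q * (q - p) \<noteq> 0"
    using cayley_coeff_nonzero[OF assms(1,2)] assms(2) by simp
  ultimately have "filterlim (\<lambda>t. cayley_coeff p q * (c t - p) * inverse (q - c t)) at_infinity F"
    by (intro tendsto_mult_filterlim_at_infinity)
  then show ?thesis
    by (simp add: cayley_def divide_inverse)
qed

lemma hyp_geodesic_cayley_filterlim:
  assumes "cmod p = 1" "cmod q = 1" "p \<noteq> q" "hyp_geodesic x q c"
  shows "filterlim (\<lambda>t. cayley p q (c t)) at_infinity at_top"
  using assms hyp_geodesic_ne_ideal[OF assms(4,2)]
  by (intro filterlim_cayley_at_infinity) (auto simp: hyp_geodesic_def)

lemma hyp_geodesic_cayley_imag_axis:
  assumes "cmod p = 1" "cmod q = 1" "p \<noteq> q" "hyp_geodesic p q c"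
  obtains \<alpha> where "\<alpha> > 0" "\<And>t. cayley p q (c t) = \<i> * of_real (\<alpha> * exp t)"
proof -
  let ?g = "\<lambda>t. cayley p q (c t)"
  have g: "uhp_geodesic ?g" "filterlim ?g at_infinity at_top"
    using hyp_geodesic_cayley[OF assms] hyp_geodesic_cayley_filterlim[OF assms] by auto
  have lim: "(?g \<longlongrightarrow> cayley p q p) at_bot"
    using assms(3,4) by (intro tendsto_cayley) (auto simp: hyp_geodesic_def)
  have "of_real (Re (?g 0)) = cayley p q p"
    by (rule tendsto_unique[OF _ uhp_geodesic_tendsto_at_bot[OF g] lim]) simp
  then have "Re (?g 0) = 0"
    by simp
  show ?thesis
  proof (rule that)
    show "Im (?g 0) > 0"
      using g(1) by (simp add: uhp_geodesic_def)
    show "?g t = \<i> * of_real (Im (?g 0) * exp t)" for t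
      using uhp_geodesic_vertical[OF g, of t] \<open>Re (?g 0) = 0\<close> by (simp add: complex_eq_iff)
  qed
qed

lemma hyp_geodesic_reverse:
  assumes "hyp_geodesic p q c"
  shows "hyp_geodesic q p (\<lambda>t. c (- t))"
proof -
  have "((\<lambda>t. c (- t)) \<longlongrightarrow> p) at_top"
    using assms by (simp add: hyp_geodesic_def filterlim_at_bot_mirror)
  moreover have "((\<lambda>t. c (- t)) \<longlongrightarrow> q) at_bot"
    using assms by (simp add: hyp_geodesic_def filterlim_at_top_mirror)
  ultimately show ?thesis
    using assms unfolding hyp_geodesic_def by (auto simp: abs_minus_commute)
qed

lemma geod_commute: "geod p q = geod q p"
proof -
  have "geod p q \<subseteq> geod q p" for p q
  proof
    fix z
    assume "z \<in> geod p q"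
    then obtain c t where c: "hyp_geodesic p q c" and z: "z = c t"
      by (auto simp: geod_def)
    have "hyp_geodesic q p (\<lambda>t. c (- t))" "z = (\<lambda>t. c (- t)) (- t)"
      using hyp_geodesic_reverse[OF c] z by simp_all
    then show "z \<in> geod q p"
      unfolding geod_def by blast
  qed
  then show ?thesis
    by (intro equalityI)
qed

lemma Re_cayley_geod:
  assumes "cmod p = 1" "cmod q = 1" "p \<noteq> q" "x \<noteq> q" "z \<in> geod q x"
  shows "Re (cayley p q z) = Re (cayley p q x)"
proof -
  have "z \<in> geod x q"
    by (subst geod_commute) (rule assms(5))
  then obtain c t where "hyp_geodesic x q c" and z: "z = c t"
    unfolding geod_def by auto
  let ?g = "\<lambda>t. cayley p q (c t)"
  have g: "uhp_geodesic ?g" "filterlim ?g at_infinity at_top"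
    using hyp_geodesic_cayley[OF assms(1-3)] hyp_geodesic_cayley_filterlim[OF assms(1-3)]
      \<open>hyp_geodesic x q c\<close> by auto
  have lim: "(?g \<longlongrightarrow> cayley p q x) at_bot"
    using \<open>hyp_geodesic x q c\<close> assms(4) by (intro tendsto_cayley) (auto simp: hyp_geodesic_def)
  have "of_real (Re (?g 0)) = cayley p q x"
    by (rule tendsto_unique[OF _ uhp_geodesic_tendsto_at_bot[OF g] lim]) simp
  moreover have "Re (?g t) = Re (?g 0)"
    using uhp_geodesic_vertical[OF g, of t] by simp
  ultimately show ?thesis
    using z by (metis Re_complex_of_real)
qed

lemma hyp_geodesic_ends_ne:
  assumes "hyp_geodesic a b c"
  shows "a \<noteq> b"
proof
  assume "a = b"
  then have c: "hyp_geodesic a a c"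
    using assms by simp
  have a: "cmod a = 1" "cmod (- a) = 1" "- a \<noteq> a"
    using c by (auto simp: hyp_geodesic_def)
  let ?g = "\<lambda>t. cayley (- a) a (c t)"
  have g: "uhp_geodesic ?g" "filterlim ?g at_infinity at_top"
    using hyp_geodesic_cayley[OF a(2,1,3) c] hyp_geodesic_cayley_filterlim[OF a(2,1,3) c] by auto
  have "filterlim ?g at_infinity at_bot"
    using c hyp_geodesic_ne_ideal[OF c a(1)] a
    by (intro filterlim_cayley_at_infinity) (auto simp: hyp_geodesic_def)
  with uhp_geodesic_tendsto_at_bot[OF g] show False
    by (intro not_tendsto_and_filterlim_at_infinity[of at_bot ?g]) simp_all
qed

lemma tendsto_cayley_inv:
  "(g \<longlongrightarrow> w) F \<Longrightarrow> w + cayley_coeff p q \<noteq> 0 \<Longrightarrow>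
    ((\<lambda>t. cayley_inv p q (g t)) \<longlongrightarrow> cayley_inv p q w) F"
  unfolding cayley_inv_def by (intro tendsto_intros) auto

lemma hyp_geodesic_exists:
  assumes "cmod p = 1" "cmod q = 1" "p \<noteq> q"
  shows "hyp_geodesic p q (\<lambda>t. cayley_inv p q (\<i> * of_real (exp t)))"
proof (rule hyp_geodesic_cayley_inv[OF assms uhp_geodesic_imag_axis assms(1,2)])
  have k: "cayley_coeff p q \<noteq> 0"
    by (rule cayley_coeff_nonzero[OF assms(1,3)])
  have "((\<lambda>t. \<i> * of_real (exp t)) \<longlongrightarrow> \<i> * of_real 0) at_bot"
    by (intro tendsto_intros exp_at_bot)
  then have "((\<lambda>t. cayley_inv p q (\<i> * of_real (exp t))) \<longlongrightarrow> cayley_inv p q 0) at_bot"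
    using k by (intro tendsto_cayley_inv) simp_all
  then show "((\<lambda>t. cayley_inv p q (\<i> * of_real (exp t))) \<longlongrightarrow> p) at_bot"
    using k by (simp add: cayley_inv_def)
next
  let ?w = "\<lambda>t. \<i> * complex_of_real (exp t) + cayley_coeff p q"
  have exp_inf: "filterlim (\<lambda>t. complex_of_real (exp t)) at_infinity at_top"
    by (rule filterlim_compose[OF filterlim_of_real_at_infinity exp_at_top])
  have "filterlim (\<lambda>t. \<i> * complex_of_real (exp t)) at_infinity at_top"
    by (rule tendsto_mult_filterlim_at_infinity[OF tendsto_const _ exp_inf]) simp
  then have "filterlim ?w at_infinity at_top"
    by (rule tendsto_add_filterlim_at_infinity'[OF _ tendsto_const])
  then have "((\<lambda>t. q - cayley_coeff p q * (q - p) / ?w t) \<longlongrightarrow> q - 0) at_top"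
    by (intro tendsto_diff tendsto_const tendsto_divide_0[OF tendsto_const])
  moreover have "q - cayley_coeff p q * (q - p) / ?w t = cayley_inv p q (\<i> * of_real (exp t))" for t
    using q_minus_cayley_inv[OF add_cayley_coeff_nonzero[OF assms], of "\<i> * of_real (exp t)"]
    by (simp add: algebra_simps)
  ultimately show "((\<lambda>t. cayley_inv p q (\<i> * of_real (exp t))) \<longlongrightarrow> q) at_top"
    by simp
qed

lemma hyp_geodesic_cayley_inv_semicircle:
  assumes "cmod p = 1" "cmod q = 1" "p \<noteq> q" "A \<noteq> 0"
  shows "hyp_geodesic (cayley_inv p q (of_real A)) (cayley_inv p q (of_real (- A)))
    (\<lambda>s. cayley_inv p q (uhp_semicircle A s))"
proof -
  have "of_real A + cayley_coeff p q \<noteq> 0" "of_real (- A) + cayley_coeff p q \<noteq> 0"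
    by (rule add_cayley_coeff_nonzero[OF assms(1-3)]; simp)+
  then show ?thesis
    using tendsto_cayley_inv[OF uhp_semicircle_tendsto_at_bot]
      tendsto_cayley_inv[OF uhp_semicircle_tendsto_at_top]
    by (intro hyp_geodesic_cayley_inv[OF assms(1-3) uhp_geodesic_semicircle[OF assms(4)]]
        norm_cayley_inv_of_real[OF assms(1-3)])
qed

section \<open>Feet of perpendiculars and the shear\<close>

lemma Re_cnj_mult_mult: "Re (cnj (d * u) * (d * v)) = (cmod d)\<^sup>2 * Re (cnj u * v)"
proof -
  have "cnj (d * u) * (d * v) = (d * cnj d) * (cnj u * v)"
    by (simp add: mult_ac)
  also have "d * cnj d = of_real ((cmod d)\<^sup>2)"
    by (simp only: complex_mult_cnj cmod_power2)
  finally have "Re (cnj (d * u) * (d * v)) = Re (of_real ((cmod d)\<^sup>2) * (cnj u * v))"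
    by (simp only:)
  also have "\<dots> = (cmod d)\<^sup>2 * Re (cnj u * v)"
    by simp
  finally show ?thesis .
qed

definition cayley_deriv :: "complex \<Rightarrow> complex \<Rightarrow> complex \<Rightarrow> complex" where
  "cayley_deriv p q z = cayley_coeff p q * (q - p) / (q - z)\<^sup>2"

lemma has_field_derivative_cayley:
  "z \<noteq> q \<Longrightarrow> (cayley p q has_field_derivative cayley_deriv p q z) (at z)"
  unfolding cayley_def[abs_def] cayley_deriv_def
  by (auto intro!: derivative_eq_intros simp: power2_eq_square field_simps)

lemma has_field_derivative_cayley_inv:
  "w + cayley_coeff p q \<noteq> 0 \<Longrightarrow>
    (cayley_inv p q has_field_derivative cayley_coeff p q * (q - p) / (w + cayley_coeff p q)\<^sup>2) (at w)"
  unfolding cayley_inv_def[abs_def]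
  by (auto intro!: derivative_eq_intros simp: power2_eq_square field_simps)

lemma cayley_deriv_nonzero:
  "cmod p = 1 \<Longrightarrow> p \<noteq> q \<Longrightarrow> z \<noteq> q \<Longrightarrow> cayley_deriv p q z \<noteq> 0"
  using cayley_coeff_nonzero[of p q] by (simp add: cayley_deriv_def)

lemma cayley_square:
  assumes "cmod p = 1" "z \<noteq> q"
  shows "(cayley p q z)\<^sup>2 = - \<i> * cnj p * (z - p)\<^sup>2 / 2 * cayley_deriv p q z"
  using assms(2) unfolding cayley_def cayley_deriv_def
  by (simp add: cayley_coeff_unit[OF assms(1)] power2_eq_square field_simps)

lemma cnj_unit_mult_square_diff:
  assumes "cmod a = 1" "cmod q = 1"
  shows "cnj a * (q - a)\<^sup>2 = - of_real ((cmod (q - a))\<^sup>2) * q"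
  using assms unfolding unit_iff_Re_Im cmod_power2
  by (simp add: complex_eq_iff power2_eq_square algebra_simps) algebra

lemma cnj_unit_eq_cayley_deriv:
  assumes "cmod p = 1" "cmod q = 1" "cmod a = 1" "p \<noteq> q" "a \<noteq> q"
  shows "cnj a = \<i> * of_real (2 * (cmod (q - a))\<^sup>2 / (cmod (q - p))\<^sup>2) * cayley_deriv p q a"
proof -
  have "cayley_coeff p q * (q - p) = - \<i> * (cnj p * (q - p)\<^sup>2) / 2"
    by (simp add: cayley_coeff_unit[OF assms(1)] power2_eq_square algebra_simps)
  also have "cnj p * (q - p)\<^sup>2 = - of_real ((cmod (q - p))\<^sup>2) * q"
    by (rule cnj_unit_mult_square_diff[OF assms(1,2)])
  finally have k: "cayley_coeff p q * (q - p) = \<i> * of_real ((cmod (q - p))\<^sup>2) * q / 2"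
    by simp
  have "cayley_deriv p q a = \<i> * of_real ((cmod (q - p))\<^sup>2) * q / (2 * (q - a)\<^sup>2)"
    unfolding cayley_deriv_def k by simp
  moreover have "cnj a = - of_real ((cmod (q - a))\<^sup>2) * q / (q - a)\<^sup>2"
    using cnj_unit_mult_square_diff[OF assms(3,2)] assms(5) by (simp add: field_simps)
  ultimately show ?thesis
    using assms(4) by (simp add: field_simps)
qed

lemma hyp_geodesic_cayley_deriv:
  assumes "cmod p = 1" "cmod q = 1" "p \<noteq> q" "hyp_geodesic p q c"
    and "(c has_vector_derivative u) (at t)"
  shows "cayley_deriv p q (c t) * u = cayley p q (c t)"
proof -
  obtain \<alpha> where c: "\<And>t. cayley p q (c t) = \<i> * of_real (\<alpha> * exp t)"
    using hyp_geodesic_cayley_imag_axis[OF assms(1-4)] by blast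
  have "(cayley p q \<circ> c has_vector_derivative u * cayley_deriv p q (c t)) (at t)"
    by (rule field_vector_diff_chain_at[OF assms(5) has_field_derivative_cayley])
      (rule hyp_geodesic_ne_ideal[OF assms(4,2)])
  moreover have "cayley p q \<circ> c = (\<lambda>t. \<i> * of_real (\<alpha> * exp t))"
    using c by auto
  moreover have "((\<lambda>t. \<i> * of_real (\<alpha> * exp t)) has_vector_derivative \<i> * of_real (\<alpha> * exp t)) (at t)"
    by (auto intro!: derivative_eq_intros has_vector_derivative_mult_right has_vector_derivative_of_real)
  ultimately show ?thesis
    using c vector_derivative_unique_at by (metis mult.commute)
qed

text \<open>The direction of a geodesic at a point z depends only on its initial ideal point a, not on
  its endpoint e.\<close>
lemma hyp_geodesic_vector_derivative:
  assumes "hyp_geodesic a e c" "(c has_vector_derivative v) (at s)"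
  obtains r where "r \<noteq> 0" "v = of_real r * (cnj a * (c s - a)\<^sup>2)"
proof -
  have ae: "cmod a = 1" "cmod e = 1" "a \<noteq> e"
    using assms(1) hyp_geodesic_ends_ne by (auto simp: hyp_geodesic_def)
  obtain \<beta> where "\<beta> > 0" and c: "\<And>t. cayley a e (c t) = \<i> * of_real (\<beta> * exp t)"
    using hyp_geodesic_cayley_imag_axis[OF ae assms(1)] by blast
  define y where "y = \<beta> * exp s"
  have "y > 0"
    using \<open>\<beta> > 0\<close> by (simp add: y_def)
  have ne: "c s \<noteq> e"
    by (rule hyp_geodesic_ne_ideal[OF assms(1) ae(2)])
  have D: "cayley_deriv a e (c s) * v = \<i> * of_real y"
    using hyp_geodesic_cayley_deriv[OF ae assms] c by (simp add: y_def)
  have "cayley_deriv a e (c s) * (v * (\<i> * of_real y)) = (cayley_deriv a e (c s) * v) * (\<i> * of_real y)"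
    by (simp only: mult.assoc)
  also have "\<dots> = (cayley a e (c s))\<^sup>2"
    by (simp only: D c y_def power2_eq_square)
  also have "\<dots> = cayley_deriv a e (c s) * (- \<i> * cnj a * (c s - a)\<^sup>2 / 2)"
    by (simp add: cayley_square[OF ae(1) ne] mult_ac)
  finally have "v * (\<i> * of_real y) = - \<i> * cnj a * (c s - a)\<^sup>2 / 2"
    using mult_left_cancel[OF cayley_deriv_nonzero[OF ae(1,3) ne]] by blast
  then have "v = - \<i> * cnj a * (c s - a)\<^sup>2 / 2 / (\<i> * of_real y)"
    using \<open>y > 0\<close> by (subst eq_divide_eq) simp
  also have "\<dots> = of_real (- 1 / (2 * y)) * (cnj a * (c s - a)\<^sup>2)"
    using \<open>y > 0\<close> by (simp add: field_simps)
  finally show ?thesis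
    using \<open>y > 0\<close> by (intro that[of "- 1 / (2 * y)"]) simp_all
qed

lemma cayley_deriv_mult_square_diff:
  assumes "z \<noteq> q" "a \<noteq> q"
  shows "cayley_deriv p q z * cayley_deriv p q a * (z - a)\<^sup>2 = (cayley p q z - cayley p q a)\<^sup>2"
  unfolding cayley_diff[OF assms] cayley_deriv_def
  using assms by (simp add: power2_eq_square field_simps)

lemma Im_cayley_perp_foot:
  assumes "cmod p = 1" "cmod q = 1" "cmod a = 1" "p \<noteq> q" "a \<noteq> q"
    and "hyp_geodesic p q c" "perp_foot a c t"
  shows "Im (cayley p q (c t)) = \<bar>Re (cayley p q a)\<bar>"
proof -
  obtain e c' u v where c': "hyp_geodesic a e c'" "c' 0 = c t"
    and u: "(c has_vector_derivative u) (at t)" and v: "(c' has_vector_derivative v) (at 0)"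
    and orth: "Re (cnj u * v) = 0"
    using assms(7) unfolding perp_foot_def by blast
  obtain r where "r \<noteq> 0" and r: "v = of_real r * (cnj a * (c t - a)\<^sup>2)"
    using hyp_geodesic_vector_derivative[OF c'(1) v] c'(2) by metis
  obtain \<alpha> where "\<alpha> > 0" and c: "\<And>t. cayley p q (c t) = \<i> * of_real (\<alpha> * exp t)"
    using hyp_geodesic_cayley_imag_axis[OF assms(1,2,4,6)] by blast
  define y A D where "y = \<alpha> * exp t" and "A = Re (cayley p q a)" and "D = cayley_deriv p q (c t)"
  define \<sigma> where "\<sigma> = 2 * (cmod (q - a))\<^sup>2 / (cmod (q - p))\<^sup>2"
  have "y > 0" "\<sigma> > 0"
    using \<open>\<alpha> > 0\<close> assms(4,5) by (simp_all add: y_def \<sigma>_def)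
  have ne: "c t \<noteq> q"
    by (rule hyp_geodesic_ne_ideal[OF assms(6,2)])
  have Du: "D * u = \<i> * of_real y"
    using hyp_geodesic_cayley_deriv[OF assms(1,2,4,6) u] c by (simp add: D_def y_def)
  have "D * v = of_real r * \<i> * of_real \<sigma> * (D * cayley_deriv p q a * (c t - a)\<^sup>2)"
    by (simp add: r cnj_unit_eq_cayley_deriv[OF assms(1-5)] \<sigma>_def mult_ac)
  also have "\<dots> = of_real r * \<i> * of_real \<sigma> * (\<i> * of_real y - of_real A)\<^sup>2"
    unfolding D_def cayley_deriv_mult_square_diff[OF ne assms(5)]
    using c cayley_unit_of_real[OF assms(1,2,3,5)] by (simp add: y_def A_def)
  finally have Dv: "D * v = of_real r * \<i> * of_real \<sigma> * (\<i> * of_real y - of_real A)\<^sup>2" .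
  have "Re (cnj (D * u) * (D * v)) = 0"
    by (simp only: Re_cnj_mult_mult orth mult_zero_right)
  then have "Re (cnj (\<i> * of_real y) * (of_real r * \<i> * of_real \<sigma> * (\<i> * of_real y - of_real A)\<^sup>2)) = 0"
    by (simp only: Du Dv)
  then have "r * \<sigma> * y * (A\<^sup>2 - y\<^sup>2) = 0"
    by (simp add: power2_eq_square algebra_simps)
  then have "y\<^sup>2 = A\<^sup>2"
    using \<open>r \<noteq> 0\<close> \<open>\<sigma> > 0\<close> \<open>y > 0\<close> by simp
  have "y = \<bar>A\<bar>"
    by (rule power2_eq_imp_eq) (use \<open>y\<^sup>2 = A\<^sup>2\<close> \<open>y > 0\<close> in simp_all)
  then show ?thesis
    using c by (simp add: y_def A_def)
qed

lemma perp_foot_imag_axis: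
  assumes "cmod p = 1" "cmod q = 1" "cmod a = 1" "p \<noteq> q" "a \<noteq> p" "a \<noteq> q"
  shows "perp_foot a (\<lambda>t. cayley_inv p q (\<i> * of_real (exp t))) (ln \<bar>Re (cayley p q a)\<bar>)"
proof -
  define A where "A = Re (cayley p q a)"
  let ?k = "cayley_coeff p q"
  have "A \<noteq> 0"
    using Re_cayley_unit_nonzero[OF assms] by (simp add: A_def)
  have a: "a = cayley_inv p q (of_real A)"
    using cayley_inv_cayley[OF assms(1,4,6)] cayley_unit_of_real[OF assms(1-3,6)]
    by (simp add: A_def)
  define c' where "c' s = cayley_inv p q (uhp_semicircle A s)" for s
  have c': "hyp_geodesic a (cayley_inv p q (of_real (- A))) c'"
    unfolding c'_def a by (rule hyp_geodesic_cayley_inv_semicircle[OF assms(1,2,4) \<open>A \<noteq> 0\<close>])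
  have c'_0: "c' 0 = cayley_inv p q (\<i> * of_real (exp (ln \<bar>A\<bar>)))"
    using \<open>A \<noteq> 0\<close> by (simp add: c'_def uhp_semicircle_0)
  define w D where "w = \<i> * of_real \<bar>A\<bar>" and "D = ?k * (q - p) / (w + ?k)\<^sup>2"
  have "w + ?k \<noteq> 0"
    unfolding w_def by (rule add_cayley_coeff_nonzero[OF assms(1,2,4)]) simp
  then have D: "(cayley_inv p q has_field_derivative D) (at w)"
    unfolding D_def by (rule has_field_derivative_cayley_inv)
  have "D \<noteq> 0"
    using \<open>w + ?k \<noteq> 0\<close> cayley_coeff_nonzero[OF assms(1,4)] assms(4) by (simp add: D_def)
  have "((\<lambda>t. \<i> * of_real (exp t)) has_vector_derivative w) (at (ln \<bar>A\<bar>))"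
    using \<open>A \<noteq> 0\<close>
    by (auto intro!: derivative_eq_intros has_vector_derivative_mult_right has_vector_derivative_of_real
        simp: w_def)
  then have u: "((\<lambda>t. cayley_inv p q (\<i> * of_real (exp t))) has_vector_derivative w * D) (at (ln \<bar>A\<bar>))"
    using field_vector_diff_chain_at[of _ w "ln \<bar>A\<bar>" "cayley_inv p q" D] D \<open>A \<noteq> 0\<close>
    by (simp add: o_def w_def)
  have v: "(c' has_vector_derivative of_real (- A) * D) (at 0)"
    using field_vector_diff_chain_at[OF uhp_semicircle_vector_derivative_0, of "cayley_inv p q" D] D
    by (simp add: o_def c'_def[abs_def] uhp_semicircle_0 w_def)
  have "Re (cnj (w * D) * (of_real (- A) * D)) = (cmod D)\<^sup>2 * Re (cnj w * of_real (- A))"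
    by (simp only: mult.commute[of w D] mult.commute[of "of_real (- A)" D] Re_cnj_mult_mult)
  then have orth: "Re (cnj (w * D) * (of_real (- A) * D)) = 0"
    by (simp add: w_def)
  have "w * D \<noteq> 0" "of_real (- A) * D \<noteq> 0"
    using \<open>A \<noteq> 0\<close> \<open>D \<noteq> 0\<close> by (simp_all add: w_def)
  then show ?thesis
    unfolding perp_foot_def A_def[symmetric] using c' c'_0 u v orth by blast
qed

lemma signed_foot_dist_cayley:
  assumes "cmod p = 1" "cmod q = 1" "cmod a = 1" "cmod b = 1" "p \<noteq> q"
    and "a \<noteq> p" "a \<noteq> q" "b \<noteq> p" "b \<noteq> q"
  shows "signed_foot_dist p q a b = ln \<bar>Re (cayley p q b) / Re (cayley p q a)\<bar>"
  unfolding signed_foot_dist_def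
proof (rule the_equality)
  have "Re (cayley p q a) \<noteq> 0" "Re (cayley p q b) \<noteq> 0"
    using Re_cayley_unit_nonzero[OF assms(1-3,5-7)] Re_cayley_unit_nonzero[OF assms(1,2,4,5,8,9)] .
  then have "ln \<bar>Re (cayley p q b) / Re (cayley p q a)\<bar> =
      ln (\<bar>Re (cayley p q b)\<bar>) - ln (\<bar>Re (cayley p q a)\<bar>)"
    by (simp add: ln_div)
  then show "\<exists>c t1 t2. hyp_geodesic p q c \<and> perp_foot a c t1 \<and> perp_foot b c t2 \<and>
      ln \<bar>Re (cayley p q b) / Re (cayley p q a)\<bar> = t2 - t1"
    using hyp_geodesic_exists[OF assms(1,2,5)] perp_foot_imag_axis[OF assms(1-3,5-7)]
      perp_foot_imag_axis[OF assms(1,2,4,5,8,9)] by blast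
next
  fix s
  assume "\<exists>c t1 t2. hyp_geodesic p q c \<and> perp_foot a c t1 \<and> perp_foot b c t2 \<and> s = t2 - t1"
  then obtain c t1 t2 where c: "hyp_geodesic p q c" and "perp_foot a c t1" "perp_foot b c t2"
    and s: "s = t2 - t1"
    by blast
  obtain \<alpha> where "\<alpha> > 0" and c_eq: "\<And>t. cayley p q (c t) = \<i> * of_real (\<alpha> * exp t)"
    using hyp_geodesic_cayley_imag_axis[OF assms(1,2,5) c] by blast
  have "\<bar>Re (cayley p q b) / Re (cayley p q a)\<bar> = (\<alpha> * exp t2) / (\<alpha> * exp t1)"
    using Im_cayley_perp_foot[OF assms(1-3,5,7) c \<open>perp_foot a c t1\<close>]
      Im_cayley_perp_foot[OF assms(1,2,4,5,9) c \<open>perp_foot b c t2\<close>] c_eq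
    by simp
  also have "\<dots> = exp (t2 - t1)"
    using \<open>\<alpha> > 0\<close> by (simp add: exp_diff)
  finally show "s = ln \<bar>Re (cayley p q b) / Re (cayley p q a)\<bar>"
    by (simp add: s)
qed

section \<open>Lengths of horocyclic arcs\<close>

lemma Im_cayley_horocycle:
  assumes "cmod p = 1" "cmod q = 1" "r > 0" "z \<in> horocycle q r"
  shows "Im (cayley p q z) = (cmod (q - p))\<^sup>2 * (1 - r) / (4 * r)"
proof -
  have z: "cmod z < 1" "(cmod (z - of_real (1 - r) * q))\<^sup>2 = r\<^sup>2"
    using assms(4) by (auto simp: horocycle_def)
  have "z \<noteq> q"
    using z(1) assms(2) by auto
  have "r * (1 - (cmod z)\<^sup>2) = (1 - r) * (cmod (q - z))\<^sup>2"
    using z(2) assms(2) unfolding unit_iff_Re_Im cmod_power2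
    by (simp add: power2_eq_square algebra_simps) algebra
  moreover have "(cmod (q - z))\<^sup>2 > 0"
    using \<open>z \<noteq> q\<close> by simp
  ultimately have "(1 - (cmod z)\<^sup>2) / (cmod (q - z))\<^sup>2 = (1 - r) / r"
    using assms(3) by (simp add: field_simps)
  moreover have "Im (cayley p q z) = (cmod (q - p))\<^sup>2 / 4 * ((1 - (cmod z)\<^sup>2) / (cmod (q - z))\<^sup>2)"
    by (simp add: Im_cayley[OF assms(1,2) \<open>z \<noteq> q\<close>])
  ultimately show ?thesis
    by simp
qed

lemma has_integral_abs_deriv_mono:
  fixes f f' :: "real \<Rightarrow> real"
  assumes "a \<le> b" "mono_on {a..b} f" "\<And>t. t \<in> {a..b} \<Longrightarrow> (f has_real_derivative f' t) (at t)"
  shows "((\<lambda>t. \<bar>f' t\<bar>) has_integral f b - f a) {a..b}"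
proof (rule has_integral_spike_finite[of "{a, b}"])
  show "(f' has_integral f b - f a) {a..b}"
    using assms(1,3)
    by (intro fundamental_theorem_of_calculus)
      (auto simp flip: has_real_derivative_iff_has_vector_derivative
        intro: has_field_derivative_at_within)
  show "\<bar>f' t\<bar> = f' t" if "t \<in> {a..b} - {a, b}" for t
    using mono_on_imp_deriv_nonneg[OF assms(2) assms(3)[of t]] that by auto
qed simp

lemma has_integral_abs_deriv_inj:
  fixes f f' :: "real \<Rightarrow> real"
  assumes "a \<le> b" "inj_on f {a..b}" "\<And>t. t \<in> {a..b} \<Longrightarrow> (f has_real_derivative f' t) (at t)"
  shows "((\<lambda>t. \<bar>f' t\<bar>) has_integral \<bar>f b - f a\<bar>) {a..b}"
proof -
  have "continuous_on {a..b} f"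
    by (rule continuous_at_imp_continuous_on) (use assms(3) DERIV_isCont in blast)
  then consider "strict_mono_on {a..b} f" | "strict_antimono_on {a..b} f"
    using injective_eq_monotone_map[of "{a..b}" f] assms(2) by auto
  then show ?thesis
  proof cases
    case 1
    then have "f a \<le> f b"
      using mono_onD[OF strict_mono_on_imp_mono_on[OF 1], of a b] assms(1) by simp
    then show ?thesis
      using has_integral_abs_deriv_mono[OF assms(1) strict_mono_on_imp_mono_on[OF 1] assms(3)] by simp
  next
    case 2
    then have anti: "antimono_on {a..b} f"
      using strict_antimono_iff_antimono by blast
    then have "mono_on {a..b} (\<lambda>t. - f t)"
      by (auto simp: monotone_on_def)
    moreover have "f b \<le> f a"
      using anti assms(1) by (auto simp: monotone_on_def)
    ultimately show ?thesis
      using has_integral_abs_deriv_mono[OF assms(1), of "\<lambda>t. - f t" "\<lambda>t. - f' t"] assms(3)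
      by (auto intro: DERIV_minus)
  qed
qed

lemma cayley_deriv_conformal:
  assumes "cmod p = 1" "cmod q = 1" "p \<noteq> q" "cmod z < 1"
  shows "cmod (cayley_deriv p q z * v) / Im (cayley p q z) = 2 * cmod v / (1 - (cmod z)\<^sup>2)"
proof -
  have "z \<noteq> q"
    using assms(2,4) by auto
  then have pos: "(cmod (q - p))\<^sup>2 > 0" "(cmod (q - z))\<^sup>2 > 0" "1 - (cmod z)\<^sup>2 > 0"
    using assms(3,4) by (auto simp: abs_square_less_1)
  have norm_deriv: "cmod (cayley_deriv p q z) = (cmod (q - p))\<^sup>2 / (2 * (cmod (q - z))\<^sup>2)"
    by (simp add: cayley_deriv_def norm_mult norm_divide norm_power norm_cayley_coeff[OF assms(1)]
        power2_eq_square)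
  show ?thesis
    unfolding norm_mult norm_deriv Im_cayley[OF assms(1,2) \<open>z \<noteq> q\<close>] using pos
    by (simp add: field_simps)
qed

lemma Im_vector_derivative_eq_0:
  assumes "(g has_vector_derivative g') (at t)" "open S" "t \<in> S" "\<And>s. s \<in> S \<Longrightarrow> Im (g s) = c"
  shows "Im g' = 0"
proof -
  have "((\<lambda>s. Im (g s)) has_real_derivative Im g') (at t)"
    using assms(1) by (simp add: has_vector_derivative_complex_iff)
  then have "((\<lambda>s. c) has_real_derivative Im g') (at t)"
    by (rule has_field_derivative_transform_within_open[OF _ assms(2,3)]) (use assms(4) in auto)
  then show ?thesis
    by (rule DERIV_unique[OF _ DERIV_const])
qed

lemma inj_on_Re_cayley_horizontal:
  assumes "cmod p = 1" "p \<noteq> q" "inj_on h S"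
    and "\<And>t. t \<in> S \<Longrightarrow> h t \<noteq> q" "\<And>t. t \<in> S \<Longrightarrow> Im (cayley p q (h t)) = Y"
  shows "inj_on (\<lambda>t. Re (cayley p q (h t))) S"
proof (rule inj_onI)
  fix s t
  assume st: "s \<in> S" "t \<in> S" "Re (cayley p q (h s)) = Re (cayley p q (h t))"
  then have "cayley p q (h s) = cayley p q (h t)"
    using assms(5)[of s] assms(5)[of t] by (simp add: complex_eq_iff)
  then have "h s = h t"
    by (metis cayley_inv_cayley[OF assms(1,2)] assms(4) st(1,2))
  then show "s = t"
    using assms(3) st(1,2) by (simp add: inj_on_def)
qed

lemma hyp_length_cayley_horizontal:
  assumes "cmod p = 1" "cmod q = 1" "p \<noteq> q" "arc h" "h C1_differentiable_on {0..1}"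
    and disk: "\<And>t. t \<in> {0..1} \<Longrightarrow> cmod (h t) < 1"
    and horizontal: "\<And>t. t \<in> {0..1} \<Longrightarrow> Im (cayley p q (h t)) = Y"
  shows "hyp_length h = \<bar>Re (cayley p q (h 1)) - Re (cayley p q (h 0))\<bar> / Y"
proof -
  obtain D where D: "\<And>t. t \<in> {0..1} \<Longrightarrow> (h has_vector_derivative D t) (at t)"
    using assms(5) unfolding C1_differentiable_on_def by blast
  have ne: "h t \<noteq> q" if "t \<in> {0..1}" for t
    using disk[OF that] assms(2) by auto
  define g' where "g' t = D t * cayley_deriv p q (h t)" for t
  have g: "((\<lambda>t. cayley p q (h t)) has_vector_derivative g' t) (at t)" if "t \<in> {0..1}" for t
    using field_vector_diff_chain_at[OF D[OF that] has_field_derivative_cayley[OF ne[OF that]]]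
    by (simp add: o_def g'_def)
  define f where "f t = Re (cayley p q (h t))" for t
  have "inj_on f {0..1}"
    unfolding f_def using assms(1,3,4) ne horizontal
    by (intro inj_on_Re_cayley_horizontal) (auto simp: arc_def)
  moreover have "(f has_real_derivative Re (g' t)) (at t)" if "t \<in> {0..1}" for t
    unfolding f_def[abs_def] by (rule has_field_derivative_Re[OF g[OF that]])
  ultimately have "((\<lambda>t. \<bar>Re (g' t)\<bar>) has_integral \<bar>f 1 - f 0\<bar>) {0..1}"
    by (intro has_integral_abs_deriv_inj) auto
  then have integral: "((\<lambda>t. \<bar>Re (g' t)\<bar> / Y) has_integral \<bar>f 1 - f 0\<bar> / Y) {0..1}"
    by (rule has_integral_divide)
  have integrand: "2 * cmod (vector_derivative h (at t)) / (1 - (cmod (h t))\<^sup>2) = \<bar>Re (g' t)\<bar> / Y"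
    if "t \<in> {0..1} - {0, 1}" for t
  proof -
    have t: "t \<in> {0<..<1}" "t \<in> {0..1}"
      using that by auto
    have "Im (g' t) = 0"
      by (rule Im_vector_derivative_eq_0[OF g[OF t(2)] _ t(1)]) (use horizontal in auto)
    then have "\<bar>Re (g' t)\<bar> = cmod (cayley_deriv p q (h t) * D t)"
      by (simp add: cmod_eq_Re g'_def mult.commute)
    then show ?thesis
      using cayley_deriv_conformal[OF assms(1-3) disk[OF t(2)], of "D t"] horizontal[OF t(2)]
        vector_derivative_at[OF D[OF t(2)]]
      by simp
  qed
  have "((\<lambda>t. 2 * cmod (vector_derivative h (at t)) / (1 - (cmod (h t))\<^sup>2)) has_integral
      \<bar>f 1 - f 0\<bar> / Y) {0..1}"
    by (rule has_integral_spike_finite[where S = "{0, 1}", OF _ integrand integral]) simp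
  then show ?thesis
    by (simp add: hyp_length_def f_def integral_unique)
qed

lemma hyp_length_horocyclic_arc:
  assumes "cmod p = 1" "cmod q = 1" "p \<noteq> q" "x \<noteq> q" "y \<noteq> q"
    and "arc h" "h C1_differentiable_on {0..1}" "r \<in> {0<..<1}" "path_image h \<subseteq> horocycle q r"
    and "pathstart h \<in> geod q x" "pathfinish h \<in> geod q y" "z \<in> path_image h"
  shows "hyp_length h = \<bar>Re (cayley p q y) - Re (cayley p q x)\<bar> / Im (cayley p q z)"
proof -
  have horo: "h t \<in> horocycle q r" if "t \<in> {0..1}" for t
    using assms(9) that by (auto simp: path_image_def)
  have "hyp_length h = \<bar>Re (cayley p q (h 1)) - Re (cayley p q (h 0))\<bar> / Im (cayley p q z)"
  proof (rule hyp_length_cayley_horizontal[OF assms(1-3,6,7)])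
    show "cmod (h t) < 1" if "t \<in> {0..1}" for t
      using horo[OF that] by (simp add: horocycle_def)
    show "Im (cayley p q (h t)) = Im (cayley p q z)" if "t \<in> {0..1}" for t
      using Im_cayley_horocycle[OF assms(1,2) _ horo[OF that]] assms(8,9,12)
        Im_cayley_horocycle[OF assms(1,2), of r z] by auto
  qed
  moreover have "Re (cayley p q (h 0)) = Re (cayley p q x)" "Re (cayley p q (h 1)) = Re (cayley p q y)"
    using Re_cayley_geod[OF assms(1-3)] assms(4,5,10,11)
    by (auto simp: pathstart_def pathfinish_def)
  ultimately show ?thesis
    by simp
qed

lemma Re_cayley_swap:
  assumes "cmod p = 1" "cmod q = 1" "cmod a = 1" "a \<noteq> p" "a \<noteq> q"
  shows "Re (cayley q p a) * Re (cayley p q a) = - (cmod (q - p))\<^sup>2 / 4"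
proof -
  have "of_real (Re (cayley q p a) * Re (cayley p q a)) = cayley q p a * cayley p q a"
    using cayley_unit_of_real[OF assms(2,1,3,4)] cayley_unit_of_real[OF assms(1-3,5)]
    by (metis of_real_mult)
  also have "\<dots> = of_real (- (cmod (q - p))\<^sup>2 / 4)"
    using cayley_swap[OF assms(1,2,4,5)] by simp
  finally show ?thesis
    by (simp only: of_real_eq_iff)
qed

lemma hyp_length_horocyclic_arcs_mult:
  assumes ideal: "cmod v1 = 1" "cmod v2 = 1" "cmod a = 1" "cmod b = 1"
    and distinct: "distinct [v1, v2, a, b]"
    and h1: "arc h1" "h1 C1_differentiable_on {0..1}" "\<exists>r\<in>{0<..<1}. path_image h1 \<subseteq> horocycle v1 r"
      "pathstart h1 \<in> geod v1 a" "pathfinish h1 \<in> geod v1 v2"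
    and h2: "arc h2" "h2 C1_differentiable_on {0..1}" "\<exists>r\<in>{0<..<1}. path_image h2 \<subseteq> horocycle v2 r"
      "pathstart h2 = pathfinish h1" "pathfinish h2 \<in> geod v2 b"
  shows "hyp_length h1 * hyp_length h2 = \<bar>Re (cayley v1 v2 b) / Re (cayley v1 v2 a)\<bar>"
proof -
  have ne: "v1 \<noteq> v2" "v2 \<noteq> v1" "a \<noteq> v1" "a \<noteq> v2" "b \<noteq> v1" "b \<noteq> v2"
    using distinct by auto
  define K where "K = (cmod (v1 - v2))\<^sup>2"
  have "K > 0"
    using ne by (simp add: K_def)
  define z where "z = pathfinish h1"
  have z: "z \<in> path_image h1" "z \<in> path_image h2"
    using pathfinish_in_path_image[of h1] pathstart_in_path_image[of h2] h2(4)
    by (simp_all add: z_def)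
  obtain r1 r2 where "r1 \<in> {0<..<1}" "path_image h1 \<subseteq> horocycle v1 r1"
    and "r2 \<in> {0<..<1}" "path_image h2 \<subseteq> horocycle v2 r2"
    using h1(3) h2(3) by blast
  then have l1: "hyp_length h1 = \<bar>Re (cayley v2 v1 a)\<bar> / Im (cayley v2 v1 z)"
    and l2: "hyp_length h2 = \<bar>Re (cayley v1 v2 b)\<bar> / Im (cayley v1 v2 z)"
    using hyp_length_horocyclic_arc[OF ideal(2,1) ne(2) ne(3) ne(2) h1(1,2) _ _ h1(4,5) z(1)]
      hyp_length_horocyclic_arc[OF ideal(1,2) ne(1) ne(1) ne(6) h2(1,2) _ _ _ h2(5) z(2)]
      h1(5) h2(4) geod_commute[of v1 v2]
    by auto
  have "Re (cayley v2 v1 z) = 0"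
    using Re_cayley_geod[OF ideal(2,1) ne(2) ne(2) h1(5)] by (simp add: z_def)
  moreover have "z \<noteq> v1" "z \<noteq> v2"
    using z(1) h1(3) ideal(1,2) by (auto simp: horocycle_def)
  ultimately have heights: "Im (cayley v1 v2 z) * Im (cayley v2 v1 z) = K / 4"
    using cayley_swap[OF ideal(2,1), of z] by (simp add: K_def complex_eq_iff norm_minus_commute)
  have feet: "\<bar>Re (cayley v1 v2 a)\<bar> * \<bar>Re (cayley v2 v1 a)\<bar> = K / 4"
    using Re_cayley_swap[OF ideal(2,1,3) ne(4,3)]
    by (simp add: K_def norm_minus_commute flip: abs_mult)
  then have "Re (cayley v2 v1 a) \<noteq> 0"
    using \<open>K > 0\<close> by auto
  have "hyp_length h1 * hyp_length h2 =
      \<bar>Re (cayley v1 v2 b)\<bar> * \<bar>Re (cayley v2 v1 a)\<bar> / (Im (cayley v1 v2 z) * Im (cayley v2 v1 z))"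
    unfolding l1 l2 by (simp add: mult.commute)
  also have "\<dots> = \<bar>Re (cayley v1 v2 b)\<bar> * \<bar>Re (cayley v2 v1 a)\<bar> /
      (\<bar>Re (cayley v1 v2 a)\<bar> * \<bar>Re (cayley v2 v1 a)\<bar>)"
    unfolding heights feet ..
  finally show ?thesis
    using \<open>Re (cayley v2 v1 a) \<noteq> 0\<close> by simp
qed

lemma ideal_left_asym: "ideal_left v2 v1 a \<Longrightarrow> \<not> ideal_left v1 v2 a"
  by (simp add: ideal_left_def ccw_def algebra_simps)

lemma exp_shear_cayley:
  assumes ideal: "cmod v1 = 1" "cmod v2 = 1" "cmod a = 1" "cmod b = 1"
    and distinct: "distinct [v1, v2, a, b]"
  shows "ideal_left v1 v2 a \<Longrightarrow> exp (shear v1 v2 a b) = \<bar>Re (cayley v1 v2 b) / Re (cayley v1 v2 a)\<bar>"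
    and "ideal_left v2 v1 a \<Longrightarrow> exp (- shear v1 v2 a b) = \<bar>Re (cayley v1 v2 b) / Re (cayley v1 v2 a)\<bar>"
proof -
  have ne: "v1 \<noteq> v2" "a \<noteq> v1" "a \<noteq> v2" "b \<noteq> v1" "b \<noteq> v2"
    using distinct by auto
  define A A' B B' where "A = Re (cayley v2 v1 a)" and "A' = Re (cayley v1 v2 a)"
    and "B = Re (cayley v2 v1 b)" and "B' = Re (cayley v1 v2 b)"
  have "A \<noteq> 0" "A' \<noteq> 0" "B \<noteq> 0" "B' \<noteq> 0"
    unfolding A_def A'_def B_def B'_def by (rule Re_cayley_unit_nonzero; use ideal ne in simp)+
  have "A' * A = B' * B"
    using Re_cayley_swap[OF ideal(2,1,3) ne(3,2)] Re_cayley_swap[OF ideal(2,1,4) ne(5,4)]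
    by (simp add: A_def A'_def B_def B'_def)
  then have "\<bar>A / B\<bar> = \<bar>B' / A'\<bar>"
    using \<open>A' \<noteq> 0\<close> \<open>B \<noteq> 0\<close> by (simp add: field_simps flip: abs_mult)
  moreover have "signed_foot_dist v1 v2 a b = ln \<bar>B' / A'\<bar>" "signed_foot_dist v2 v1 a b = ln \<bar>B / A\<bar>"
    unfolding A_def A'_def B_def B'_def by (rule signed_foot_dist_cayley; use ideal ne in simp)+
  ultimately show "ideal_left v1 v2 a \<Longrightarrow> exp (shear v1 v2 a b) = \<bar>B' / A'\<bar>"
    "ideal_left v2 v1 a \<Longrightarrow> exp (- shear v1 v2 a b) = \<bar>B' / A'\<bar>"
    using \<open>A \<noteq> 0\<close> \<open>A' \<noteq> 0\<close> \<open>B \<noteq> 0\<close> \<open>B' \<noteq> 0\<close> ideal_left_asym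
    by (auto simp: shear_def exp_minus)
qed

theorem lemmaA2:
  fixes v1 v2 a b :: complex and h1 h2 :: "real \<Rightarrow> complex"
  assumes ideal: "cmod v1 = 1" "cmod v2 = 1" "cmod a = 1" "cmod b = 1"
    and distinct: "distinct [v1, v2, a, b]"
    and opposite: "ideal_left v1 v2 a \<longleftrightarrow> ideal_left v2 v1 b"
    and h1_arc: "arc h1" "h1 C1_differentiable_on {0..1}"
    and h1_horo: "\<exists>r\<in>{0<..<1}. path_image h1 \<subseteq> horocycle v1 r"
    and h1_ends: "pathstart h1 \<in> geod v1 a" "pathfinish h1 \<in> geod v1 v2"
    and h2_arc: "arc h2" "h2 C1_differentiable_on {0..1}"
    and h2_horo: "\<exists>r\<in>{0<..<1}. path_image h2 \<subseteq> horocycle v2 r"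
    and h2_ends: "pathstart h2 = pathfinish h1" "pathfinish h2 \<in> geod v2 b"
  shows "(ideal_left v1 v2 a \<longrightarrow> hyp_length h2 = exp (shear v1 v2 a b) / hyp_length h1) \<and>
         (ideal_left v2 v1 a \<longrightarrow> hyp_length h2 = exp (- shear v1 v2 a b) / hyp_length h1)"
proof -
  let ?r = "\<bar>Re (cayley v1 v2 b) / Re (cayley v1 v2 a)\<bar>"
  have lengths: "hyp_length h1 * hyp_length h2 = ?r"
    by (rule hyp_length_horocyclic_arcs_mult
        [OF ideal distinct h1_arc h1_horo h1_ends h2_arc h2_horo h2_ends])
  have "?r \<noteq> 0"
    using Re_cayley_unit_nonzero[OF ideal(1,2,3)] Re_cayley_unit_nonzero[OF ideal(1,2,4)] distinct
    by auto
  then have "hyp_length h1 \<noteq> 0"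
    using lengths by auto
  then have "hyp_length h2 = hyp_length h1 * hyp_length h2 / hyp_length h1"
    by simp
  also have "\<dots> = ?r / hyp_length h1"
    unfolding lengths ..
  finally show ?thesis
    using exp_shear_cayley[OF ideal distinct] by simp
qed

end
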